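(* Let $z_1,z_2,z_3,z_4\in\mathbb{C}$ be the vertices of a convex quadrilateral, labelled in cyclic order around its boundary, and for $j=1,\dots,4$ (indices mod $4$) let $$\alpha_j=\angle z_{j+1}z_jz_{j+2},\qquad \beta_j=\angle z_{j+2}z_jz_{j-1},\qquad \gamma_j=\angle z_{j-1}z_jz_{j+1}.$$ Define $$S_1=\sum_{j=1}^4(\cos\alpha_j+\cos\beta_j+\cos\gamma_j),\qquad S_2=\sum_{j=1}^4(\cos\alpha_j+\cos\beta_j+\cos\gamma_j)(\cos\alpha_{j+1}+\cos\gamma_{j+2}+\cos\beta_{j+3}).$$ Then $8S_1+2S_2\ge 40$.
   Context: Angles $\angle XYZ\in[0,\pi]$ denote the usual unsigned angle at $Y$ between the segments $YX$ and $YZ$. *)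

theory Defs
  imports "HOL-Analysis.Analysis"
begin

definition ang :: "complex \<Rightarrow> complex \<Rightarrow> complex \<Rightarrow> real" where
  "ang X Y Z = arccos (inner (X - Y) (Z - Y) / (norm (X - Y) * norm (Z - Y)))"

text \<open>Cross product (signed area) of two plane vectors.\<close>
definition cross2 :: "complex \<Rightarrow> complex \<Rightarrow> real" where
  "cross2 a b = Im (cnj a * b)"

definition convex_quad :: "(nat \<Rightarrow> complex) \<Rightarrow> bool" where
  "convex_quad z \<longleftrightarrow>
     (\<forall>j<4. cross2 (z ((j+1) mod 4) - z (j mod 4)) (z ((j+2) mod 4) - z ((j+1) mod 4)) > 0) \<or>
     (\<forall>j<4. cross2 (z ((j+1) mod 4) - z (j mod 4)) (z ((j+2) mod 4) - z ((j+1) mod 4)) < 0)"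

definition qalpha :: "(nat \<Rightarrow> complex) \<Rightarrow> nat \<Rightarrow> real" where
  "qalpha z j = ang (z ((j+1) mod 4)) (z (j mod 4)) (z ((j+2) mod 4))"

definition qbeta :: "(nat \<Rightarrow> complex) \<Rightarrow> nat \<Rightarrow> real" where
  "qbeta z j = ang (z ((j+2) mod 4)) (z (j mod 4)) (z ((j+3) mod 4))"

definition qgamma :: "(nat \<Rightarrow> complex) \<Rightarrow> nat \<Rightarrow> real" where
  "qgamma z j = ang (z ((j+3) mod 4)) (z (j mod 4)) (z ((j+1) mod 4))"

end

theory Submission
  imports Defs
begin

text \<open>For each \<open>j\<close> the second factor \<open>t\<^sub>j\<close> of \<open>S\<^sub>2\<close> is the sum of the cosines of the
  angles of the triangle formed by the three vertices other than \<open>z\<^sub>j\<close>, so \<open>t\<^sub>j \<ge> 1\<close>;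
  convexity is only needed to make these triangles non-degenerate. The twelve angles of
  these four triangles are exactly the twelve angles in \<open>S\<^sub>1\<close>, so \<open>S\<^sub>1 = \<Sum> t\<^sub>j\<close>.
  Since the first factor \<open>f\<^sub>j\<close> is at least \<open>-3\<close>, summing
  \<open>(t\<^sub>j - 1) (f\<^sub>j + 5) \<ge> 0\<close> gives \<open>S\<^sub>2 + 4 S\<^sub>1 \<ge> 20\<close>.\<close>

lemma cos_ang:
  assumes "A \<noteq> B" "C \<noteq> B"
  shows "cos (ang A B C) = inner (A - B) (C - B) / (norm (A - B) * norm (C - B))"
proof -
  have "\<bar>inner (A - B) (C - B)\<bar> \<le> norm (A - B) * norm (C - B)"
    by (rule Cauchy_Schwarz_ineq2)
  moreover have "norm (A - B) * norm (C - B) > 0"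
    using assms by simp
  ultimately have "\<bar>inner (A - B) (C - B) / (norm (A - B) * norm (C - B))\<bar> \<le> 1"
    by (simp add: abs_divide)
  then show ?thesis
    unfolding ang_def by (rule cos_arccos_abs)
qed

lemma cos_ang_law_of_cosines:
  assumes "A \<noteq> B" "C \<noteq> B"
  shows "cos (ang A B C) =
    ((norm (A - B))\<^sup>2 + (norm (C - B))\<^sup>2 - (norm (A - C))\<^sup>2) / (2 * norm (A - B) * norm (C - B))"
  using assms by (simp add: cos_ang dot_norm_neg[of "A - B" "C - B"])

text \<open>The excess over \<open>1\<close> is the classical \<open>r/R\<close> (inradius over circumradius).\<close>
lemma law_of_cosines_sum_ge_one:
  fixes a b c :: real
  assumes "a > 0" "b > 0" "c > 0" "a \<le> b + c" "b \<le> a + c" "c \<le> a + b"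
  shows "1 \<le> (b\<^sup>2 + c\<^sup>2 - a\<^sup>2) / (2 * b * c) + (a\<^sup>2 + c\<^sup>2 - b\<^sup>2) / (2 * a * c)
              + (a\<^sup>2 + b\<^sup>2 - c\<^sup>2) / (2 * a * b)"
proof -
  have "(b\<^sup>2 + c\<^sup>2 - a\<^sup>2) / (2 * b * c) + (a\<^sup>2 + c\<^sup>2 - b\<^sup>2) / (2 * a * c)
          + (a\<^sup>2 + b\<^sup>2 - c\<^sup>2) / (2 * a * b)
        = 1 + (b + c - a) * (a + c - b) * (a + b - c) / (2 * a * b * c)"
    using assms by (simp add: field_simps) (simp add: algebra_simps power2_eq_square)
  moreover have "(b + c - a) * (a + c - b) * (a + b - c) / (2 * a * b * c) \<ge> 0"
    using assms by simp
  ultimately show ?thesis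
    by linarith
qed

lemma triangle_cos_sum_ge_one:
  fixes A B C :: complex
  assumes "A \<noteq> B" "B \<noteq> C" "A \<noteq> C"
  shows "cos (ang B A C) + cos (ang A B C) + cos (ang A C B) \<ge> 1"
proof -
  define a b c where "a = dist B C" and "b = dist A C" and "c = dist A B"
  have pos: "a > 0" "b > 0" "c > 0"
    using assms by (simp_all add: a_def b_def c_def)
  have "a \<le> b + c" "b \<le> a + c" "c \<le> a + b"
    unfolding a_def b_def c_def by (metis dist_commute dist_triangle)+
  note triangle = law_of_cosines_sum_ge_one[OF pos this]
  have "cos (ang B A C) = (b\<^sup>2 + c\<^sup>2 - a\<^sup>2) / (2 * b * c)"
       "cos (ang A B C) = (a\<^sup>2 + c\<^sup>2 - b\<^sup>2) / (2 * a * c)"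
       "cos (ang A C B) = (a\<^sup>2 + b\<^sup>2 - c\<^sup>2) / (2 * a * b)"
    using assms
    by (simp_all add: cos_ang_law_of_cosines a_def b_def c_def dist_norm norm_minus_commute mult_ac add_ac)
  with triangle show ?thesis
    by simp
qed

lemma cross2_turn_nonzero_imp_distinct:
  assumes "cross2 (b - a) (c - b) \<noteq> 0"
  shows "a \<noteq> b" "b \<noteq> c" "a \<noteq> c"
proof -
  show "a \<noteq> b" "b \<noteq> c"
    using assms by (auto simp: cross2_def)
  show "a \<noteq> c"
  proof
    assume "a = c"
    then have "cross2 (b - a) (c - b) = 0"
      by (simp add: cross2_def algebra_simps)
    with assms show False
      by simp
  qed
qed

lemma convex_quad_inj_on:
  assumes "convex_quad z"
  shows "inj_on z {..<4}"
proof -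
  have turn: "cross2 (z ((j+1) mod 4) - z (j mod 4)) (z ((j+2) mod 4) - z ((j+1) mod 4)) \<noteq> 0"
    if "j < 4" for j
    using assms that unfolding convex_quad_def by force
  have "cross2 (z 1 - z 0) (z 2 - z 1) \<noteq> 0" "cross2 (z 2 - z 1) (z 3 - z 2) \<noteq> 0"
       "cross2 (z 3 - z 2) (z 0 - z 3) \<noteq> 0"
    using turn[of 0] turn[of 1] turn[of 2]
    by (simp_all add: numeral_2_eq_2[symmetric] numeral_3_eq_3[symmetric])
  then have "z 0 \<noteq> z 1" "z 1 \<noteq> z 2" "z 0 \<noteq> z 2" "z 2 \<noteq> z 3" "z 1 \<noteq> z 3" "z 3 \<noteq> z 0"
    by (auto dest: cross2_turn_nonzero_imp_distinct)
  moreover have "{..<4::nat} = {0, 1, 2, 3}"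
    by auto
  ultimately show ?thesis
    unfolding inj_on_def by auto
qed

text \<open>The three angles are those of the triangle \<open>z\<^sub>k\<^sub>+\<^sub>1 z\<^sub>k\<^sub>+\<^sub>2 z\<^sub>k\<^sub>+\<^sub>3\<close>, at its three vertices.\<close>
lemma convex_quad_triangle_cos_sum_ge_one:
  assumes "convex_quad z"
  shows "cos (qalpha z (k+1)) + cos (qgamma z (k+2)) + cos (qbeta z (k+3)) \<ge> 1"
proof -
  define A B C where "A = z ((k+1) mod 4)" and "B = z ((k+2) mod 4)" and "C = z ((k+3) mod 4)"
  have "(k+1) mod 4 \<noteq> (k+2) mod 4" "(k+2) mod 4 \<noteq> (k+3) mod 4" "(k+1) mod 4 \<noteq> (k+3) mod 4"
    by presburger+
  then have "A \<noteq> B" "B \<noteq> C" "A \<noteq> C"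
    unfolding A_def B_def C_def by (simp_all add: inj_on_contraD[OF convex_quad_inj_on[OF assms]])
  moreover have "(k+2+3) mod 4 = (k+1) mod 4" "(k+3+2) mod 4 = (k+1) mod 4" "(k+3+3) mod 4 = (k+2) mod 4"
    by presburger+
  then have "qalpha z (k+1) = ang B A C" "qgamma z (k+2) = ang A B C" "qbeta z (k+3) = ang A C B"
    by (simp_all add: qalpha_def qgamma_def qbeta_def A_def B_def C_def add_ac)
  ultimately show ?thesis
    using triangle_cos_sum_ge_one by simp
qed

lemma quad_angles_periodic:
  "qalpha z (j + 4) = qalpha z j" "qbeta z (j + 4) = qbeta z j" "qgamma z (j + 4) = qgamma z j"
proof -
  have "(j + 4) mod 4 = j mod 4" "(j + 4 + i) mod 4 = (j + i) mod 4" for i :: nat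
    by presburger+
  then show "qalpha z (j + 4) = qalpha z j" "qbeta z (j + 4) = qbeta z j" "qgamma z (j + 4) = qgamma z j"
    by (simp_all only: qalpha_def qbeta_def qgamma_def)
qed

lemma sum_lessThan_shift_periodic:
  fixes g :: "nat \<Rightarrow> 'a::cancel_comm_monoid_add"
  assumes "\<And>j. g (j + n) = g j"
  shows "(\<Sum>j<n. g (j + k)) = (\<Sum>j<n. g j)"
proof (induction k)
  case 0
  show ?case by simp
next
  case (Suc k)
  have "(\<Sum>j<Suc n. g (j + k)) = g k + (\<Sum>j<n. g (j + Suc k))"
    by (subst sum.lessThan_Suc_shift) simp
  moreover have "(\<Sum>j<Suc n. g (j + k)) = g k + (\<Sum>j<n. g (j + k))"
    using assms[of k] by (simp add: add.commute)
  ultimately show ?case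
    using Suc.IH by simp
qed

lemma sum_mult_ge_of_lower_bounds:
  fixes f t :: "'a \<Rightarrow> real"
  assumes "\<And>i. i \<in> I \<Longrightarrow> t i \<ge> 1" "\<And>i. i \<in> I \<Longrightarrow> f i \<ge> -5" "sum f I = sum t I"
  shows "4 * sum f I + (\<Sum>i\<in>I. f i * t i) \<ge> 5 * card I"
proof -
  have "(t i - 1) * (f i + 5) \<ge> 0" if "i \<in> I" for i
    using assms(1,2)[OF that] by simp
  then have "0 \<le> (\<Sum>i\<in>I. (t i - 1) * (f i + 5))"
    by (rule sum_nonneg)
  also have "\<dots> = (\<Sum>i\<in>I. f i * t i) + 5 * sum t I - sum f I - 5 * card I"
    by (simp add: algebra_simps sum.distrib sum_subtractf sum_distrib_right)
  finally show ?thesis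
    using assms(3) by linarith
qed

theorem corollary2:
  fixes z :: "nat \<Rightarrow> complex"
  assumes "convex_quad z"
  defines "S1 \<equiv> (\<Sum>j<4. cos (qalpha z j) + cos (qbeta z j) + cos (qgamma z j))"
      and "S2 \<equiv> (\<Sum>j<4. (cos (qalpha z j) + cos (qbeta z j) + cos (qgamma z j)) *
                         (cos (qalpha z (j+1)) + cos (qgamma z (j+2)) + cos (qbeta z (j+3))))"
  shows "8 * S1 + 2 * S2 \<ge> 40"
proof -
  define f where "f j = cos (qalpha z j) + cos (qbeta z j) + cos (qgamma z j)" for j
  define t where "t j = cos (qalpha z (j+1)) + cos (qgamma z (j+2)) + cos (qbeta z (j+3))" for j
  have "(\<Sum>j<4. cos (qalpha z (j+1))) = (\<Sum>j<4. cos (qalpha z j))"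
       "(\<Sum>j<4. cos (qgamma z (j+2))) = (\<Sum>j<4. cos (qgamma z j))"
       "(\<Sum>j<4. cos (qbeta z (j+3))) = (\<Sum>j<4. cos (qbeta z j))"
    by (rule sum_lessThan_shift_periodic, simp add: quad_angles_periodic)+
  then have "sum t {..<4} = sum f {..<4}"
    unfolding f_def t_def sum.distrib by simp
  moreover have "t j \<ge> 1" for j
    unfolding t_def using assms(1) by (rule convex_quad_triangle_cos_sum_ge_one)
  moreover have "f j \<ge> -5" for j
    unfolding f_def using cos_ge_minus_one[of "qalpha z j"] cos_ge_minus_one[of "qbeta z j"]
      cos_ge_minus_one[of "qgamma z j"] by linarith
  ultimately have "4 * sum f {..<4} + (\<Sum>j<4. f j * t j) \<ge> 5 * card {..<4::nat}"
    by (intro sum_mult_ge_of_lower_bounds) auto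
  then show ?thesis
    unfolding S1_def S2_def f_def t_def by simp
qed

end
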